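(* Let $N,M_t,M_r$ be positive integers, $P_0>0$, $\sigma^2>0$, $\alpha\in\mathbb C$, $L>0$, and $\theta,\theta_1,\theta_2\in\mathbb R$. Let $\mathbf G_t=\sqrt{L}\,\mathbf a(\theta_2)\mathbf c^T(\theta_1)\in\mathbb C^{N\times M_t}$ and $\mathbf G_r=\sqrt{L}\,\mathbf b(\theta_1)\mathbf a^T(\theta_2)\in\mathbb C^{M_r\times N}$. Then $\mathrm{SNR}_1^\star:=\max_{\mathbf R,\mathbf\Phi}\mathrm{SNR}_1(\mathbf R,\mathbf\Phi)=\frac{P_0|\alpha|^2L^2M_tM_rN^4}{\sigma^2}$ and $\mathrm{SNR}_2^\star:=\max_{\mathbf R,\mathbf\Phi}\mathrm{SNR}_2(\mathbf R,\mathbf\Phi)=\frac{P_0|\alpha|^2LM_tM_rN^2}{\sigma^2}$, where the maxima are over all positive semidefinite $\mathbf R\in\mathbb C^{M_t\times M_t}$ with $\mathrm{tr}(\mathbf R)\le P_0$ and all $\mathbf\Phi=\mathrm{diag}(e^{j\phi_1},\dots,e^{j\phi_N})$, $\phi_n\in\mathbb R$. In particular these grow proportionally to $N^4$ and $N^2$, respectively.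
   Context: $j=\sqrt{-1}$. Fix $\hat d>0$, $\lambda>0$. For a positive integer $K$, $\mathbf s_K(\theta)\in\mathbb C^K$ has $k$-th entry $e^{j\pi(2k-K-1)\hat d\sin\theta/\lambda}$. Set $\mathbf a(\theta)=\mathbf s_N(\theta)$, $\mathbf b(\theta)=\mathbf s_{M_r}(\theta)$, $\mathbf c(\theta)=\mathbf s_{M_t}(\theta)$. Define $\mathrm{SNR}_1(\mathbf R,\mathbf\Phi)=\frac{|\alpha|^2\|\mathbf G_r\mathbf\Phi^T\mathbf a(\theta)\|^2\,\mathbf a^T(\theta)\mathbf\Phi\mathbf G_t\mathbf R\mathbf G_t^H\mathbf\Phi^H\mathbf a^*(\theta)}{\sigma^2}$, $\mathrm{SNR}_2(\mathbf R,\mathbf\Phi)=\frac{|\alpha|^2\|\mathbf b(\theta)\|^2\,\mathbf a^T(\theta)\mathbf\Phi\mathbf G_t\mathbf R\mathbf G_t^H\mathbf\Phi^H\mathbf a^*(\theta)}{\sigma^2}$. *)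

theory Defs
  imports Complex_Main "Jordan_Normal_Form.Matrix" "Jordan_Normal_Form.Schur_Decomposition"
begin

text \<open>Steering vector s_K(theta) in C^K; entry k (1-based) is
  exp(j pi (2k-K-1) d sin(theta)/lambda). Here indices are 0-based, so entry k is
  exp(j pi (2k+1-K) d sin(theta)/lambda).\<close>
definition steer :: "real \<Rightarrow> real \<Rightarrow> nat \<Rightarrow> real \<Rightarrow> complex vec" where
  "steer d lam K \<theta> =
     vec K (\<lambda>k. exp (\<i> * complex_of_real (pi * (2 * real k + 1 - real K) * d * sin \<theta> / lam)))"

definition vnorm2 :: "complex vec \<Rightarrow> real" where
  "vnorm2 v = (\<Sum>i<dim_vec v. (cmod (v $ i))\<^sup>2)"

definition outer :: "complex vec \<Rightarrow> complex vec \<Rightarrow> complex mat" where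
  "outer u v = mat (dim_vec u) (dim_vec v) (\<lambda>(i, k). u $ i * v $ k)"

definition mtrace :: "complex mat \<Rightarrow> complex" where
  "mtrace A = (\<Sum>i<dim_row A. A $$ (i, i))"

definition psd :: "nat \<Rightarrow> complex mat \<Rightarrow> bool" where
  "psd n R \<longleftrightarrow> R \<in> carrier_mat n n \<and> mat_adjoint R = R \<and>
     (\<forall>x \<in> carrier_vec n. 0 \<le> Re (conjugate x \<bullet> (R *\<^sub>v x)))"

definition phase_mat :: "nat \<Rightarrow> (nat \<Rightarrow> real) \<Rightarrow> complex mat" where
  "phase_mat N \<phi> = mat_diag N (\<lambda>n. exp (\<i> * complex_of_real (\<phi> n)))"

text \<open>The quadratic form a^T Phi G_t R G_t^H Phi^H a^*, written as u^H R u with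
  u = G_t^H Phi^H a^*. It is real for Hermitian R; we take its real part.\<close>
definition txform :: "complex vec \<Rightarrow> complex mat \<Rightarrow> complex mat \<Rightarrow> complex mat \<Rightarrow> real" where
  "txform a Gt R Phi =
     (let u = (mat_adjoint Gt * mat_adjoint Phi) *\<^sub>v conjugate a in Re (conjugate u \<bullet> (R *\<^sub>v u)))"

definition SNR1 :: "real \<Rightarrow> real \<Rightarrow> nat \<Rightarrow> real \<Rightarrow> complex \<Rightarrow> real \<Rightarrow> complex mat \<Rightarrow> complex mat
     \<Rightarrow> complex mat \<Rightarrow> complex mat \<Rightarrow> real" where
  "SNR1 d lam N \<theta> \<alpha> \<sigma>2 Gt Gr R Phi =
     (let a = steer d lam N \<theta> in
      (cmod \<alpha>)\<^sup>2 * vnorm2 ((Gr * transpose_mat Phi) *\<^sub>v a) * txform a Gt R Phi / \<sigma>2)"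

definition SNR2 :: "real \<Rightarrow> real \<Rightarrow> nat \<Rightarrow> nat \<Rightarrow> real \<Rightarrow> complex \<Rightarrow> real \<Rightarrow> complex mat
     \<Rightarrow> complex mat \<Rightarrow> complex mat \<Rightarrow> real" where
  "SNR2 d lam N Mr \<theta> \<alpha> \<sigma>2 Gt R Phi =
     (let a = steer d lam N \<theta> in
      (cmod \<alpha>)\<^sup>2 * vnorm2 (steer d lam Mr \<theta>) * txform a Gt R Phi / \<sigma>2)"

end

theory Submission
  imports Defs
begin

text \<open>
  Both channels have rank one, so for every phase vector the signal passes the surface through
  the single complex scalar g = a(theta2)^T Phi a(theta). By the triangle inequality |g| <= N, with
  equality when the phases cancel those of the two steering vectors. The receive vector then has
  squared norm L Mr |g|^2, and the transmit quadratic form is u^H R u for a vector u with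
  squared norm L Mt |g|^2. For positive semidefinite R one has u^H R u <= |u|^2 tr R, with
  equality for R proportional to u u^H. Combining the two bounds gives both maxima.
\<close>

lemma cnj_mult_self: "cnj z * z = complex_of_real ((cmod z)\<^sup>2)"
  by (metis complex_norm_square mult.commute)

lemma cmod_mult_sgn: "complex_of_real (cmod z) * sgn z = z"
  by (cases "z = 0") (simp_all add: sgn_eq)

lemma cnj_sgn_swap_moduli:
  "cnj (complex_of_real (cmod y) * sgn x) * r * (complex_of_real (cmod x) * sgn y) = cnj x * r * y"
proof -
  have "cnj (complex_of_real (cmod y) * sgn x) * r * (complex_of_real (cmod x) * sgn y)
      = cnj (complex_of_real (cmod x) * sgn x) * r * (complex_of_real (cmod y) * sgn y)"
    by (simp add: mult_ac)
  then show ?thesis by (simp only: cmod_mult_sgn)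
qed

lemma sum_delta_mult:
  "i < n \<Longrightarrow> (\<Sum>k<n. (if k = i then a else 0) * f k) = a * f i"
  "i < n \<Longrightarrow> (\<Sum>k<n. f k * (if k = i then a else 0)) = f i * a"
  for f :: "nat \<Rightarrow> 'a :: comm_ring_1"
  by (simp_all add: if_distrib[of "\<lambda>x. x * _"] if_distrib[of "\<lambda>x. _ * x"] cong: if_cong)

lemma vnorm2_smult: "vnorm2 (k \<cdot>\<^sub>v v) = (cmod k)\<^sup>2 * vnorm2 v"
  by (simp add: vnorm2_def norm_mult power_mult_distrib sum_distrib_left)

lemma vnorm2_conjugate: "vnorm2 (conjugate v) = vnorm2 v"
  by (simp add: vnorm2_def)

lemma scalar_prod_conjugate_self: "conjugate u \<bullet> u = complex_of_real (vnorm2 u)"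
  by (simp add: scalar_prod_def vnorm2_def cnj_mult_self atLeast0LessThan)

lemma quadratic_form_sum:
  assumes "x \<in> carrier_vec n" "R \<in> carrier_mat n n"
  shows "conjugate x \<bullet> (R *\<^sub>v x) = (\<Sum>i<n. cnj (x $ i) * (\<Sum>j<n. R $$ (i, j) * x $ j))"
  using assms by (auto simp: scalar_prod_def atLeast0LessThan intro!: sum.cong)

lemma smult_mat_mult_vec:
  fixes A :: "'a :: comm_semiring_0 mat"
  shows "dim_vec x = dim_col A \<Longrightarrow> (k \<cdot>\<^sub>m A) *\<^sub>v x = k \<cdot>\<^sub>v (A *\<^sub>v x)"
  by (rule eq_vecI) auto

lemma mtrace_smult: "A \<in> carrier_mat n n \<Longrightarrow> mtrace (k \<cdot>\<^sub>m A) = k * mtrace A"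
  by (simp add: mtrace_def sum_distrib_left)

lemma mat_adjoint_dims [simp]:
  "dim_row (mat_adjoint A) = dim_col A" "dim_col (mat_adjoint A) = dim_row A"
  by (simp_all add: mat_adjoint_def)

lemma mat_adjoint_index [simp]:
  "i < dim_col A \<Longrightarrow> j < dim_row A \<Longrightarrow> mat_adjoint A $$ (i, j) = cnj (A $$ (j, i))"
  by (simp add: mat_adjoint_def mat_of_rows_index)

lemma mat_adjoint_carrier: "A \<in> carrier_mat m n \<Longrightarrow> mat_adjoint A \<in> carrier_mat n m"
  by (rule carrier_matI) auto

lemma mat_adjoint_mult_conjugate:
  fixes A :: "complex mat"
  assumes "dim_vec v = dim_row A"
  shows "mat_adjoint A *\<^sub>v conjugate v = conjugate (transpose_mat A *\<^sub>v v)"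
  by (rule eq_vecI) (use assms in \<open>auto simp: scalar_prod_def\<close>)

lemma outer_dims [simp]: "dim_row (outer u v) = dim_vec u" "dim_col (outer u v) = dim_vec v"
  by (simp_all add: outer_def)

lemma outer_index [simp]: "i < dim_vec u \<Longrightarrow> j < dim_vec v \<Longrightarrow> outer u v $$ (i, j) = u $ i * v $ j"
  by (simp add: outer_def)

lemma outer_mult_vec: "dim_vec x = dim_vec v \<Longrightarrow> outer u v *\<^sub>v x = (v \<bullet> x) \<cdot>\<^sub>v u"
  by (rule eq_vecI) (auto simp: outer_def scalar_prod_def sum_distrib_left mult_ac)

lemma mtrace_outer_conjugate: "mtrace (outer u (conjugate u)) = complex_of_real (vnorm2 u)"
  unfolding mtrace_def vnorm2_def of_real_sum complex_norm_square by simp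

lemma psd_pair_le:
  assumes R: "psd n R" and i: "i < n" and j: "j < n"
  shows "Re (cnj a * R $$ (i, j) * b + cnj b * R $$ (j, i) * a)
         \<le> (cmod a)\<^sup>2 * Re (R $$ (i, i)) + (cmod b)\<^sup>2 * Re (R $$ (j, j))"
proof -
  define y where "y = vec n (\<lambda>k. (if k = i then a else 0) - (if k = j then b else 0))"
  have y: "y \<in> carrier_vec n" by (simp add: y_def)
  have Ry: "(\<Sum>l<n. R $$ (k, l) * y $ l) = R $$ (k, i) * a - R $$ (k, j) * b" for k
    using i j by (simp add: y_def right_diff_distrib sum_subtractf sum_delta_mult)
  have "conjugate y \<bullet> (R *\<^sub>v y) = (\<Sum>k<n. cnj (y $ k) * (R $$ (k, i) * a - R $$ (k, j) * b))"
    using R y by (simp add: psd_def quadratic_form_sum Ry)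
  also have "\<dots> = (\<Sum>k<n. (if k = i then cnj a else 0) * (R $$ (k, i) * a - R $$ (k, j) * b))
      - (\<Sum>k<n. (if k = j then cnj b else 0) * (R $$ (k, i) * a - R $$ (k, j) * b))"
    by (simp add: y_def left_diff_distrib sum_subtractf if_distrib[of cnj] cong: if_cong)
  also have "\<dots> = cnj a * (R $$ (i, i) * a - R $$ (i, j) * b) - cnj b * (R $$ (j, i) * a - R $$ (j, j) * b)"
    using i j by (simp only: sum_delta_mult)
  also have "\<dots> = (cnj a * a) * R $$ (i, i) + (cnj b * b) * R $$ (j, j)
      - (cnj a * R $$ (i, j) * b + cnj b * R $$ (j, i) * a)"
    by (simp add: algebra_simps)
  finally have "Re (conjugate y \<bullet> (R *\<^sub>v y)) = (cmod a)\<^sup>2 * Re (R $$ (i, i)) + (cmod b)\<^sup>2 * Re (R $$ (j, j))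
      - Re (cnj a * R $$ (i, j) * b + cnj b * R $$ (j, i) * a)"
    by (simp add: cnj_mult_self)
  moreover have "0 \<le> Re (conjugate y \<bullet> (R *\<^sub>v y))"
    using R y by (simp add: psd_def)
  ultimately show ?thesis by simp
qed

lemma psd_diag_nonneg: "psd n R \<Longrightarrow> i < n \<Longrightarrow> 0 \<le> Re (R $$ (i, i))"
  using psd_pair_le[of n R i i 1 "-1"] by simp

lemma psd_trace_nonneg: "psd n R \<Longrightarrow> 0 \<le> Re (mtrace R)"
  using psd_diag_nonneg[of n R] by (auto simp: psd_def mtrace_def intro!: sum_nonneg)

lemma psd_quadratic_form_le_trace:
  assumes R: "psd n R" and x: "x \<in> carrier_vec n"
  shows "Re (conjugate x \<bullet> (R *\<^sub>v x)) \<le> vnorm2 x * Re (mtrace R)"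
proof -
  have Rc: "R \<in> carrier_mat n n" using R by (simp add: psd_def)
  define q where "q i j = Re (cnj (x $ i) * R $$ (i, j) * x $ j)" for i j
  have pair: "q i j + q j i \<le> (cmod (x $ j))\<^sup>2 * Re (R $$ (i, i)) + (cmod (x $ i))\<^sup>2 * Re (R $$ (j, j))"
    if i: "i < n" and j: "j < n" for i j
  proof -
    \<comment> \<open>Same phases as x i, x j but swapped moduli: the cross terms are unchanged.\<close>
    define a where "a = complex_of_real (cmod (x $ j)) * sgn (x $ i)"
    define b where "b = complex_of_real (cmod (x $ i)) * sgn (x $ j)"
    have "q i j + q j i = Re (cnj a * R $$ (i, j) * b + cnj b * R $$ (j, i) * a)"
      unfolding a_def b_def cnj_sgn_swap_moduli q_def by simp
    also have "\<dots> \<le> (cmod a)\<^sup>2 * Re (R $$ (i, i)) + (cmod b)\<^sup>2 * Re (R $$ (j, j))"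
      by (rule psd_pair_le[OF R i j])
    also have "\<dots> \<le> (cmod (x $ j))\<^sup>2 * Re (R $$ (i, i)) + (cmod (x $ i))\<^sup>2 * Re (R $$ (j, j))"
      using psd_diag_nonneg[OF R i] psd_diag_nonneg[OF R j]
      by (intro add_mono mult_right_mono power_mono) (auto simp: a_def b_def norm_mult norm_sgn)
    finally show ?thesis .
  qed
  have "Re (conjugate x \<bullet> (R *\<^sub>v x)) = (\<Sum>i<n. \<Sum>j<n. q i j)"
    by (simp add: quadratic_form_sum[OF x Rc] q_def sum_distrib_left mult.assoc)
  moreover have "(\<Sum>i<n. \<Sum>j<n. q j i) = (\<Sum>i<n. \<Sum>j<n. q i j)"
    by (rule sum.swap)
  ultimately have "2 * Re (conjugate x \<bullet> (R *\<^sub>v x)) = (\<Sum>i<n. \<Sum>j<n. q i j + q j i)"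
    by (simp add: sum.distrib)
  also have "\<dots> \<le> (\<Sum>i<n. \<Sum>j<n. (cmod (x $ j))\<^sup>2 * Re (R $$ (i, i)) + (cmod (x $ i))\<^sup>2 * Re (R $$ (j, j)))"
    by (intro sum_mono pair) auto
  also have "\<dots> = 2 * (\<Sum>i<n. \<Sum>j<n. (cmod (x $ i))\<^sup>2 * Re (R $$ (j, j)))"
    by (simp only: sum.distrib sum.swap[of "\<lambda>i j. (cmod (x $ j))\<^sup>2 * Re (R $$ (i, i))"])
  also have "\<dots> = 2 * (vnorm2 x * Re (mtrace R))"
    using x Rc by (simp add: vnorm2_def mtrace_def sum_product)
  finally show ?thesis by simp
qed

lemma quadratic_form_outer_conjugate:
  assumes x: "x \<in> carrier_vec n" and u: "u \<in> carrier_vec n"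
  shows "conjugate x \<bullet> (outer u (conjugate u) *\<^sub>v x) = complex_of_real ((cmod (conjugate x \<bullet> u))\<^sup>2)"
proof -
  have "conjugate u \<bullet> x = cnj (conjugate x \<bullet> u)"
    using conjugate_sprod_vec[of "conjugate x" n u] x u by (simp add: comm_scalar_prod[of _ n])
  then show ?thesis
    using x u by (simp add: outer_mult_vec cnj_mult_self)
qed

lemma psd_outer_conjugate:
  assumes u: "u \<in> carrier_vec n" and k: "0 \<le> k"
  shows "psd n (complex_of_real k \<cdot>\<^sub>m outer u (conjugate u))"
  unfolding psd_def
proof (intro conjI ballI)
  show "complex_of_real k \<cdot>\<^sub>m outer u (conjugate u) \<in> carrier_mat n n"
    using u by auto
  show "mat_adjoint (complex_of_real k \<cdot>\<^sub>m outer u (conjugate u)) = complex_of_real k \<cdot>\<^sub>m outer u (conjugate u)"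
    by (rule eq_matI) (auto simp: outer_def)
  fix x :: "complex vec" assume x: "x \<in> carrier_vec n"
  then show "0 \<le> Re (conjugate x \<bullet> (complex_of_real k \<cdot>\<^sub>m outer u (conjugate u) *\<^sub>v x))"
    using u k by (simp add: smult_mat_mult_vec quadratic_form_outer_conjugate)
qed

lemma psd_trace_bound_attained:
  assumes u: "u \<in> carrier_vec n" and pos: "0 < vnorm2 u" and P: "0 \<le> P"
  shows "\<exists>R. psd n R \<and> Re (mtrace R) = P \<and> Re (conjugate u \<bullet> (R *\<^sub>v u)) = P * vnorm2 u"
proof (intro exI conjI)
  let ?R = "complex_of_real (P / vnorm2 u) \<cdot>\<^sub>m outer u (conjugate u)"
  show "psd n ?R"
    using u pos P by (intro psd_outer_conjugate) auto
  show "Re (mtrace ?R) = P"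
    using pos by (simp add: mtrace_smult[of "outer u (conjugate u)" "dim_vec u"] carrier_matI mtrace_outer_conjugate)
  show "Re (conjugate u \<bullet> (?R *\<^sub>v u)) = P * vnorm2 u"
    using u pos
    by (simp add: smult_mat_mult_vec quadratic_form_outer_conjugate scalar_prod_conjugate_self power2_eq_square)
qed

lemma phase_mat_dims [simp]: "dim_row (phase_mat N \<phi>) = N" "dim_col (phase_mat N \<phi>) = N"
  by (simp_all add: phase_mat_def mat_diag_def)

lemma phase_mat_carrier [simp]: "phase_mat N \<phi> \<in> carrier_mat N N"
  by (simp add: phase_mat_def)

lemma transpose_phase_mat: "transpose_mat (phase_mat N \<phi>) = phase_mat N \<phi>"
  by (rule eq_matI) (auto simp: phase_mat_def mat_diag_def)

lemma phase_mat_mult_vec: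
  "dim_vec v = N \<Longrightarrow> phase_mat N \<phi> *\<^sub>v v = vec N (\<lambda>n. exp (\<i> * complex_of_real (\<phi> n)) * v $ n)"
  by (rule eq_vecI)
    (auto simp: phase_mat_def mat_diag_def scalar_prod_def atLeast0LessThan if_distrib[of "\<lambda>x. x * _"]
      cong: if_cong)

lemma exp_neg_Arg_mult: "exp (\<i> * complex_of_real (- Arg z)) * z = complex_of_real (cmod z)"
proof -
  have "exp (\<i> * complex_of_real (- Arg z)) * z = cis (- Arg z) * rcis (cmod z) (Arg z)"
    by (simp only: rcis_cmod_Arg cis_conv_exp)
  also have "\<dots> = complex_of_real (cmod z)"
    by (simp add: rcis_def mult.left_commute cis_mult)
  finally show ?thesis .
qed

lemma scalar_prod_phase_mat_mult_vec:
  assumes "dim_vec a = N" "dim_vec w = N"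
  shows "w \<bullet> (phase_mat N \<phi> *\<^sub>v a) = (\<Sum>n<N. exp (\<i> * complex_of_real (\<phi> n)) * (w $ n * a $ n))"
  using assms by (simp add: phase_mat_mult_vec scalar_prod_def atLeast0LessThan mult_ac)

lemma cmod_scalar_prod_phase_mat_le:
  assumes "dim_vec a = N" "dim_vec w = N"
  shows "cmod (w \<bullet> (phase_mat N \<phi> *\<^sub>v a)) \<le> (\<Sum>n<N. cmod (w $ n) * cmod (a $ n))"
  unfolding scalar_prod_phase_mat_mult_vec[OF assms]
  by (rule order_trans[OF norm_sum]) (simp add: norm_mult)

lemma scalar_prod_phase_mat_aligned:
  assumes "dim_vec a = N" "dim_vec w = N"
  shows "w \<bullet> (phase_mat N (\<lambda>n. - Arg (w $ n * a $ n)) *\<^sub>v a)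
    = complex_of_real (\<Sum>n<N. cmod (w $ n) * cmod (a $ n))"
  unfolding scalar_prod_phase_mat_mult_vec[OF assms] exp_neg_Arg_mult by (simp add: norm_mult)

lemma receive_vector:
  assumes a: "dim_vec a = N" and w: "dim_vec w = N"
  shows "((s \<cdot>\<^sub>m outer b w) * transpose_mat (phase_mat N \<phi>)) *\<^sub>v a
    = (s * (w \<bullet> (phase_mat N \<phi> *\<^sub>v a))) \<cdot>\<^sub>v b"
proof -
  have G: "s \<cdot>\<^sub>m outer b w \<in> carrier_mat (dim_vec b) N"
    by (rule carrier_matI) (use w in auto)
  have "((s \<cdot>\<^sub>m outer b w) * transpose_mat (phase_mat N \<phi>)) *\<^sub>v a
      = (s \<cdot>\<^sub>m outer b w) *\<^sub>v (phase_mat N \<phi> *\<^sub>v a)"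
    using assoc_mult_mat_vec[OF G phase_mat_carrier carrier_vecI[OF a]] by (simp add: transpose_phase_mat)
  also have "\<dots> = s \<cdot>\<^sub>v ((w \<bullet> (phase_mat N \<phi> *\<^sub>v a)) \<cdot>\<^sub>v b)"
    using w by (simp add: smult_mat_mult_vec outer_mult_vec)
  finally show ?thesis
    by (simp add: smult_smult_assoc)
qed

lemma transmit_vector:
  assumes a: "dim_vec a = N" and w: "dim_vec w = N"
  shows "(mat_adjoint (s \<cdot>\<^sub>m outer w c) * mat_adjoint (phase_mat N \<phi>)) *\<^sub>v conjugate a
    = conjugate ((s * (w \<bullet> (phase_mat N \<phi> *\<^sub>v a))) \<cdot>\<^sub>v c)"
proof -
  have G: "s \<cdot>\<^sub>m outer w c \<in> carrier_mat N (dim_vec c)"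
    by (rule carrier_matI) (use w in auto)
  have "(mat_adjoint (s \<cdot>\<^sub>m outer w c) * mat_adjoint (phase_mat N \<phi>)) *\<^sub>v conjugate a
      = mat_adjoint (s \<cdot>\<^sub>m outer w c) *\<^sub>v (mat_adjoint (phase_mat N \<phi>) *\<^sub>v conjugate a)"
    using assoc_mult_mat_vec[OF mat_adjoint_carrier[OF G] mat_adjoint_carrier[OF phase_mat_carrier]
        carrier_vec_conjugate[OF carrier_vecI[OF a]]] .
  also have "\<dots> = conjugate (transpose_mat (s \<cdot>\<^sub>m outer w c) *\<^sub>v (phase_mat N \<phi> *\<^sub>v a))"
    using a w by (simp add: mat_adjoint_mult_conjugate transpose_phase_mat)
  also have "transpose_mat (s \<cdot>\<^sub>m outer w c) = s \<cdot>\<^sub>m outer c w"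
    by (rule eq_matI) (auto simp: outer_def mult.commute)
  also have "(s \<cdot>\<^sub>m outer c w) *\<^sub>v (phase_mat N \<phi> *\<^sub>v a) = s \<cdot>\<^sub>v ((w \<bullet> (phase_mat N \<phi> *\<^sub>v a)) \<cdot>\<^sub>v c)"
    using w by (simp add: smult_mat_mult_vec outer_mult_vec)
  finally show ?thesis
    by (simp add: smult_smult_assoc)
qed

lemma steer_dim [simp]: "dim_vec (steer d lam K \<theta>) = K"
  by (simp add: steer_def)

lemma cmod_steer [simp]: "k < K \<Longrightarrow> cmod (steer d lam K \<theta> $ k) = 1"
  by (simp add: steer_def)

lemma vnorm2_steer: "vnorm2 (steer d lam K \<theta>) = real K"
  by (simp add: vnorm2_def)

locale ris_channel =
  fixes d lam :: real and N Mt Mr :: nat and \<theta> \<theta>1 \<theta>2 L :: real and Gt Gr :: "complex mat"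
  assumes L_pos: "0 < L"
    and Gt_eq: "Gt = complex_of_real (sqrt L) \<cdot>\<^sub>m outer (steer d lam N \<theta>2) (steer d lam Mt \<theta>1)"
    and Gr_eq: "Gr = complex_of_real (sqrt L) \<cdot>\<^sub>m outer (steer d lam Mr \<theta>1) (steer d lam N \<theta>2)"
begin

definition gain :: "(nat \<Rightarrow> real) \<Rightarrow> complex" where
  "gain \<phi> = steer d lam N \<theta>2 \<bullet> (phase_mat N \<phi> *\<^sub>v steer d lam N \<theta>)"

definition tx_vec :: "(nat \<Rightarrow> real) \<Rightarrow> complex vec" where
  "tx_vec \<phi> = conjugate ((complex_of_real (sqrt L) * gain \<phi>) \<cdot>\<^sub>v steer d lam Mt \<theta>1)"

lemma cmod_gain_le: "cmod (gain \<phi>) \<le> real N"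
  using cmod_scalar_prod_phase_mat_le[of "steer d lam N \<theta>" N "steer d lam N \<theta>2" \<phi>]
  by (simp add: gain_def)

lemma gain_aligned: "\<exists>\<phi>. cmod (gain \<phi>) = real N"
proof
  show "cmod (gain (\<lambda>n. - Arg (steer d lam N \<theta>2 $ n * steer d lam N \<theta> $ n))) = real N"
    using scalar_prod_phase_mat_aligned[of "steer d lam N \<theta>" N "steer d lam N \<theta>2"]
    by (simp add: gain_def)
qed

lemma tx_vec_carrier: "tx_vec \<phi> \<in> carrier_vec Mt"
  by (simp add: tx_vec_def carrier_vecI)

lemma vnorm2_tx_vec: "vnorm2 (tx_vec \<phi>) = L * real Mt * (cmod (gain \<phi>))\<^sup>2"
  using L_pos by (simp add: tx_vec_def vnorm2_conjugate vnorm2_smult vnorm2_steer norm_mult power_mult_distrib)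

lemma vnorm2_receive:
  "vnorm2 ((Gr * transpose_mat (phase_mat N \<phi>)) *\<^sub>v steer d lam N \<theta>) = L * real Mr * (cmod (gain \<phi>))\<^sup>2"
  using L_pos by (simp add: Gr_eq receive_vector gain_def vnorm2_smult vnorm2_steer norm_mult power_mult_distrib)

lemma txform_eq:
  "txform (steer d lam N \<theta>) Gt R (phase_mat N \<phi>) = Re (conjugate (tx_vec \<phi>) \<bullet> (R *\<^sub>v tx_vec \<phi>))"
  by (simp add: txform_def Gt_eq transmit_vector tx_vec_def gain_def)

lemma txform_bounds:
  assumes R: "psd Mt R" and tr: "Re (mtrace R) \<le> P0"
  shows "0 \<le> txform (steer d lam N \<theta>) Gt R (phase_mat N \<phi>)"
    and "txform (steer d lam N \<theta>) Gt R (phase_mat N \<phi>) \<le> P0 * (L * real Mt * (real N)\<^sup>2)"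
proof -
  show "0 \<le> txform (steer d lam N \<theta>) Gt R (phase_mat N \<phi>)"
    using R tx_vec_carrier by (simp add: txform_eq psd_def)
  have "txform (steer d lam N \<theta>) Gt R (phase_mat N \<phi>) \<le> vnorm2 (tx_vec \<phi>) * Re (mtrace R)"
    unfolding txform_eq by (rule psd_quadratic_form_le_trace[OF R tx_vec_carrier])
  also have "\<dots> \<le> vnorm2 (tx_vec \<phi>) * P0"
    using tr L_pos by (intro mult_left_mono) (auto simp: vnorm2_tx_vec)
  also have "\<dots> \<le> P0 * (L * real Mt * (real N)\<^sup>2)"
    using L_pos cmod_gain_le psd_trace_nonneg[OF R] tr unfolding vnorm2_tx_vec
    by (subst mult.commute) (intro mult_left_mono power_mono; auto)
  finally show "txform (steer d lam N \<theta>) Gt R (phase_mat N \<phi>) \<le> P0 * (L * real Mt * (real N)\<^sup>2)" .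
qed

lemma txform_attained:
  assumes "0 < N" "0 < Mt" "0 \<le> P0" and aligned: "cmod (gain \<phi>) = real N"
  shows "\<exists>R. psd Mt R \<and> Re (mtrace R) = P0
    \<and> txform (steer d lam N \<theta>) Gt R (phase_mat N \<phi>) = P0 * (L * real Mt * (real N)\<^sup>2)"
  using psd_trace_bound_attained[OF tx_vec_carrier, of \<phi> P0] assms L_pos
  by (simp add: txform_eq vnorm2_tx_vec)

lemma SNR1_eq:
  "SNR1 d lam N \<theta> \<alpha> \<sigma>2 Gt Gr R (phase_mat N \<phi>)
    = (cmod \<alpha>)\<^sup>2 / \<sigma>2 * (L * real Mr * (cmod (gain \<phi>))\<^sup>2 * txform (steer d lam N \<theta>) Gt R (phase_mat N \<phi>))"
  by (simp add: SNR1_def Let_def vnorm2_receive)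

lemma SNR2_eq:
  "SNR2 d lam N Mr \<theta> \<alpha> \<sigma>2 Gt R (phase_mat N \<phi>)
    = (cmod \<alpha>)\<^sup>2 / \<sigma>2 * (real Mr * txform (steer d lam N \<theta>) Gt R (phase_mat N \<phi>))"
  by (simp add: SNR2_def Let_def vnorm2_steer)

lemma SNR1_le:
  assumes "0 < \<sigma>2" "psd Mt R" "Re (mtrace R) \<le> P0"
  shows "SNR1 d lam N \<theta> \<alpha> \<sigma>2 Gt Gr R (phase_mat N \<phi>)
    \<le> P0 * (cmod \<alpha>)\<^sup>2 * L\<^sup>2 * real Mt * real Mr * real N ^ 4 / \<sigma>2"
proof -
  have gain: "L * real Mr * (cmod (gain \<phi>))\<^sup>2 \<le> L * real Mr * (real N)\<^sup>2"
    using L_pos cmod_gain_le by (intro mult_left_mono power_mono) auto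
  have bound: "P0 * (cmod \<alpha>)\<^sup>2 * L\<^sup>2 * real Mt * real Mr * real N ^ 4 / \<sigma>2
      = (cmod \<alpha>)\<^sup>2 / \<sigma>2 * (L * real Mr * (real N)\<^sup>2 * (P0 * (L * real Mt * (real N)\<^sup>2)))"
    by (simp add: power2_eq_square power4_eq_xxxx)
  show ?thesis
    unfolding SNR1_eq bound
    by (intro gain txform_bounds[OF assms(2,3)] mult_left_mono mult_mono) (use L_pos assms(1) in auto)
qed

lemma SNR2_le:
  assumes "0 < \<sigma>2" "psd Mt R" "Re (mtrace R) \<le> P0"
  shows "SNR2 d lam N Mr \<theta> \<alpha> \<sigma>2 Gt R (phase_mat N \<phi>)
    \<le> P0 * (cmod \<alpha>)\<^sup>2 * L * real Mt * real Mr * real N ^ 2 / \<sigma>2"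
proof -
  have bound: "P0 * (cmod \<alpha>)\<^sup>2 * L * real Mt * real Mr * real N ^ 2 / \<sigma>2
      = (cmod \<alpha>)\<^sup>2 / \<sigma>2 * (real Mr * (P0 * (L * real Mt * (real N)\<^sup>2)))"
    by simp
  show ?thesis
    unfolding SNR2_eq bound by (intro txform_bounds[OF assms(2,3)] mult_left_mono) (use assms(1) in auto)
qed

lemma SNR1_attained:
  assumes "cmod (gain \<phi>) = real N"
    and "txform (steer d lam N \<theta>) Gt R (phase_mat N \<phi>) = P0 * (L * real Mt * (real N)\<^sup>2)"
  shows "SNR1 d lam N \<theta> \<alpha> \<sigma>2 Gt Gr R (phase_mat N \<phi>)
    = P0 * (cmod \<alpha>)\<^sup>2 * L\<^sup>2 * real Mt * real Mr * real N ^ 4 / \<sigma>2"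
  by (simp add: SNR1_eq assms power2_eq_square power4_eq_xxxx)

lemma SNR2_attained:
  assumes "txform (steer d lam N \<theta>) Gt R (phase_mat N \<phi>) = P0 * (L * real Mt * (real N)\<^sup>2)"
  shows "SNR2 d lam N Mr \<theta> \<alpha> \<sigma>2 Gt R (phase_mat N \<phi>)
    = P0 * (cmod \<alpha>)\<^sup>2 * L * real Mt * real Mr * real N ^ 2 / \<sigma>2"
  by (simp add: SNR2_eq assms)

end

theorem proposition2:
  fixes N Mt Mr :: nat and P0 \<sigma>2 L d lam \<theta> \<theta>1 \<theta>2 :: real and \<alpha> :: complex
    and Gt Gr :: "complex mat"
  assumes "N > 0" "Mt > 0" "Mr > 0" "P0 > 0" "\<sigma>2 > 0" "L > 0" "d > 0" "lam > 0"
    and Gt_def: "Gt = complex_of_real (sqrt L) \<cdot>\<^sub>m outer (steer d lam N \<theta>2) (steer d lam Mt \<theta>1)"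
    and Gr_def: "Gr = complex_of_real (sqrt L) \<cdot>\<^sub>m outer (steer d lam Mr \<theta>1) (steer d lam N \<theta>2)"
  shows
    "(\<forall>R \<phi>. psd Mt R \<and> Re (mtrace R) \<le> P0 \<longrightarrow>
        SNR1 d lam N \<theta> \<alpha> \<sigma>2 Gt Gr R (phase_mat N \<phi>)
          \<le> P0 * (cmod \<alpha>)\<^sup>2 * L\<^sup>2 * real Mt * real Mr * real N ^ 4 / \<sigma>2)
   \<and> (\<exists>R \<phi>. psd Mt R \<and> Re (mtrace R) \<le> P0 \<and>
        SNR1 d lam N \<theta> \<alpha> \<sigma>2 Gt Gr R (phase_mat N \<phi>)
          = P0 * (cmod \<alpha>)\<^sup>2 * L\<^sup>2 * real Mt * real Mr * real N ^ 4 / \<sigma>2)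
   \<and> (\<forall>R \<phi>. psd Mt R \<and> Re (mtrace R) \<le> P0 \<longrightarrow>
        SNR2 d lam N Mr \<theta> \<alpha> \<sigma>2 Gt R (phase_mat N \<phi>)
          \<le> P0 * (cmod \<alpha>)\<^sup>2 * L * real Mt * real Mr * real N ^ 2 / \<sigma>2)
   \<and> (\<exists>R \<phi>. psd Mt R \<and> Re (mtrace R) \<le> P0 \<and>
        SNR2 d lam N Mr \<theta> \<alpha> \<sigma>2 Gt R (phase_mat N \<phi>)
          = P0 * (cmod \<alpha>)\<^sup>2 * L * real Mt * real Mr * real N ^ 2 / \<sigma>2)"
proof -
  interpret ris_channel d lam N Mt Mr \<theta> \<theta>1 \<theta>2 L Gt Gr
    using assms by unfold_locales
  obtain \<phi>0 where aligned: "cmod (gain \<phi>0) = real N"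
    using gain_aligned ..
  have "\<exists>R. psd Mt R \<and> Re (mtrace R) = P0
      \<and> txform (steer d lam N \<theta>) Gt R (phase_mat N \<phi>0) = P0 * (L * real Mt * (real N)\<^sup>2)"
    by (rule txform_attained) (use assms aligned in auto)
  then obtain R0 where R0: "psd Mt R0" "Re (mtrace R0) = P0"
    "txform (steer d lam N \<theta>) Gt R0 (phase_mat N \<phi>0) = P0 * (L * real Mt * (real N)\<^sup>2)"
    by blast
  show ?thesis
    using SNR1_le SNR2_le SNR1_attained[OF aligned R0(3)] SNR2_attained[OF R0(3)] R0(1,2) assms(5)
    by (meson order_refl)
qed

end
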